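(* Let $(f_k(t))_{k=0,\ldots,n}$ be a constant speed path with speed $v>0$ and coefficients $\boldsymbol\alpha\in\mathcal A$, with $f_k(t)>0$ for all $k,t$ and $\alpha_k$ differentiable in $t$, and fix $t$. Suppose at this $t$: (1) $\alpha_k\le\alpha_{k+1}$ for $k=0,\ldots,n-1$; (2) $\frac{\partial\alpha_k}{\partial t}\ge0$ for $k=0,\ldots,n$; (3) $\alpha_{k+1}(1-\alpha_{k+1})f_{k+1}^2-\alpha_{k+2}(1-\alpha_k)f_kf_{k+2}\ge0$ for $k=0,\ldots,n-2$; and $f_{k+1}^2-f_kf_{k+2}>0$ for $k=0,\ldots,n-2$. Then for $k=0,\ldots,n-2$, $h_k\le\widetilde h_k$, where $$\widetilde h_k=\frac{2g_kg_{k+1}f_{k+1}-g_k^2f_{k+2}-g_{k+1}^2f_k}{f_{k+1}^2-f_kf_{k+2}},$$ $$h_k=(1-\alpha_k)(1-\alpha_{k+1})f_k+2\alpha_{k+1}(1-\alpha_{k+1})f_{k+1}+\alpha_{k+1}\alpha_{k+2}f_{k+2}-\frac1vf_{k+1}\frac{\partial\alpha_{k+1}}{\partial t}.$$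
   Context: Fix an integer $n\ge1$. For a sequence $(a_k)_{k\in\mathbb Z}$ write $\nabla_1 a_k=a_k-a_{k-1}$. Functions indexed by $k$ are extended by $0$ outside their stated index range. $\mathcal A$ denotes the set of measurable $\boldsymbol\alpha(t)=(\alpha_0(t),\ldots,\alpha_n(t))$, $t\in[0,1]$, with $\alpha_0\equiv0$, $\alpha_n\equiv1$ and $0\le\alpha_k(t)\le1$ for all $k,t$. A family $(f_k(t))_{k=0,\ldots,n}$ of probability mass functions on $\{0,\ldots,n\}$ is a constant speed path with speed $v\in\mathbb R$ and coefficients $\boldsymbol\alpha\in\mathcal A$ if $\frac{\partial f_k}{\partial t}(t)=-v\,\nabla_1 g_k(t)$ for $k=0,\ldots,n$, where $g_k(t)=\alpha_{k+1}(t)f_{k+1}(t)+(1-\alpha_k(t))f_k(t)$ for $k=0,\ldots,n-1$ and $g_k=0$ for $k\notin\{0,\ldots,n-1\}$. *)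

theory Defs
  imports "HOL-Analysis.Analysis"
begin

definition coeffs_A :: "nat \<Rightarrow> (nat \<Rightarrow> real \<Rightarrow> real) \<Rightarrow> bool" where
  "coeffs_A n \<alpha> \<longleftrightarrow>
     (\<forall>k\<le>n. \<alpha> k \<in> borel_measurable (restrict_space lborel {0..1})) \<and>
     (\<forall>t\<in>{0..1}. \<alpha> 0 t = 0 \<and> \<alpha> n t = 1 \<and> (\<forall>k\<le>n. 0 \<le> \<alpha> k t \<and> \<alpha> k t \<le> 1))"

definition gflux :: "nat \<Rightarrow> (nat \<Rightarrow> real \<Rightarrow> real) \<Rightarrow> (nat \<Rightarrow> real \<Rightarrow> real) \<Rightarrow> nat \<Rightarrow> real \<Rightarrow> real" where
  "gflux n \<alpha> f k t = (if k < n then \<alpha> (k+1) t * f (k+1) t + (1 - \<alpha> k t) * f k t else 0)"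

definition nabla1 :: "(nat \<Rightarrow> real) \<Rightarrow> nat \<Rightarrow> real" where
  "nabla1 a k = a k - (if k = 0 then 0 else a (k - 1))"

definition constant_speed_path ::
  "nat \<Rightarrow> real \<Rightarrow> (nat \<Rightarrow> real \<Rightarrow> real) \<Rightarrow> (nat \<Rightarrow> real \<Rightarrow> real) \<Rightarrow> bool" where
  "constant_speed_path n v \<alpha> f \<longleftrightarrow>
     coeffs_A n \<alpha> \<and>
     (\<forall>t\<in>{0..1}. (\<forall>k\<le>n. 0 \<le> f k t) \<and> (\<Sum>k\<le>n. f k t) = 1) \<and>
     (\<forall>t\<in>{0..1}. \<forall>k\<le>n.
        (f k has_real_derivative (- v * nabla1 (\<lambda>j. gflux n \<alpha> f j t) k)) (at t within {0..1}))"

end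

theory Submission
  imports Defs
begin

text \<open>
  At a fixed time write \<open>a, b, c\<close> for \<open>\<alpha>\<^sub>k, \<alpha>\<^sub>k\<^sub>+\<^sub>1, \<alpha>\<^sub>k\<^sub>+\<^sub>2\<close> and \<open>x, y, z\<close> for
  \<open>f\<^sub>k, f\<^sub>k\<^sub>+\<^sub>1, f\<^sub>k\<^sub>+\<^sub>2\<close>. With \<open>D = y\<^sup>2 - xz > 0\<close>, the claim \<open>h\<^sub>k \<le> h\<^sub>k~\<close> is
  equivalent to \<open>D h\<^sub>k \<le> D h\<^sub>k~\<close>, and the difference factors as
  \<open>(c - b) z (b y\<^sup>2 - c x z + 2 (b - a) x y) + (b - a) x ((1 - b) y\<^sup>2 - (1 - a) x z)\<close>.
  The monotonicity \<open>a \<le> b \<le> c\<close> makes the outer factors nonnegative, and hypothesis (3),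
  \<open>b (1 - b) y\<^sup>2 \<ge> c (1 - a) x z\<close>, yields both inner brackets after cancelling \<open>b\<close> or
  \<open>1 - b\<close>. The derivative term only lowers \<open>h\<^sub>k\<close> since \<open>\<partial>\<^sub>t \<alpha>\<^sub>k\<^sub>+\<^sub>1 \<ge> 0\<close>.
\<close>

lemma gflux_less:
  "k < n \<Longrightarrow> gflux n \<alpha> f k t = \<alpha> (Suc k) t * f (Suc k) t + (1 - \<alpha> k t) * f k t"
  by (simp add: gflux_def)

lemma quadratic_gap_factorization:
  fixes a b c x y z :: real
  shows "2*(b*y+(1-a)*x)*(c*z+(1-b)*y)*y - (b*y+(1-a)*x)^2*z - (c*z+(1-b)*y)^2*x
           - (y^2 - x*z) * ((1-a)*(1-b)*x + 2*b*(1-b)*y + b*c*z)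
         = (c-b)*z*(b*y^2 - c*x*z + 2*(b-a)*x*y) + (b-a)*x*((1-b)*y^2 - (1-a)*x*z)"
  by (simp add: algebra_simps power2_eq_square)

lemma cross_condition_cancel_b:
  fixes a b c x y z :: real
  assumes "0 < b" "a \<le> b" "b \<le> c" "c \<le> 1" "0 \<le> x*z"
    and cross: "c*(1-a)*x*z \<le> b*(1-b)*y^2"
  shows "(1-a)*x*z \<le> (1-b)*y^2"
proof -
  have "b*(1-a)*(x*z) \<le> c*(1-a)*(x*z)"
    using assms by (intro mult_right_mono) auto
  with cross have "b*((1-a)*x*z) \<le> b*((1-b)*y^2)"
    by (simp add: algebra_simps)
  with \<open>0 < b\<close> show ?thesis by simp
qed

lemma cross_condition_cancel_one_minus_b:
  fixes a b c x y z :: real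
  assumes "b < 1" "0 \<le> a" "a \<le> b" "b \<le> c" "0 \<le> x*z"
    and cross: "c*(1-a)*x*z \<le> b*(1-b)*y^2"
  shows "c*x*z \<le> b*y^2"
proof -
  have "c*(1-b)*(x*z) \<le> c*(1-a)*(x*z)"
    using assms by (intro mult_right_mono mult_left_mono) auto
  with cross have "(1-b)*(c*x*z) \<le> (1-b)*(b*y^2)"
    by (simp add: algebra_simps)
  with \<open>b < 1\<close> show ?thesis by simp
qed

lemma quadratic_gap_bound:
  fixes a b c x y z :: real
  assumes "0 \<le> a" "a \<le> b" "b \<le> c" "c \<le> 1" "0 \<le> x" "0 \<le> y" "0 \<le> z"
    and D: "0 < y^2 - x*z"
    and cross: "c*(1-a)*x*z \<le> b*(1-b)*y^2"
  shows "(1-a)*(1-b)*x + 2*b*(1-b)*y + b*c*z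
     \<le> (2*(b*y+(1-a)*x)*(c*z+(1-b)*y)*y - (b*y+(1-a)*x)^2*z - (c*z+(1-b)*y)^2*x) / (y^2 - x*z)"
proof -
  have xz: "0 \<le> x*z" using assms by simp
  have left: "0 \<le> (b-a)*x*((1-b)*y^2 - (1-a)*x*z)"
  proof (cases "a = b")
    case False
    with assms have "0 < b" by simp
    from cross_condition_cancel_b[OF this \<open>a \<le> b\<close> \<open>b \<le> c\<close> \<open>c \<le> 1\<close> xz cross]
    show ?thesis using assms by simp
  qed simp
  have right: "0 \<le> (c-b)*z*(b*y^2 - c*x*z + 2*(b-a)*x*y)"
  proof (cases "b = c")
    case False
    with assms have "b < 1" by simp
    from cross_condition_cancel_one_minus_b[OF this \<open>0 \<le> a\<close> \<open>a \<le> b\<close> \<open>b \<le> c\<close> xz cross]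
    show ?thesis using assms by simp
  qed simp
  show ?thesis
    using quadratic_gap_factorization[of b y a x c z] left right D
    by (simp add: pos_le_divide_eq mult.commute)
qed

theorem proposition4p3:
  fixes n :: nat and v t :: real and \<alpha> f :: "nat \<Rightarrow> real \<Rightarrow> real" and \<alpha>' :: "nat \<Rightarrow> real"
  assumes n: "n \<ge> 1"
    and path: "constant_speed_path n v \<alpha> f"
    and v: "v > 0"
    and fpos: "\<forall>k\<le>n. \<forall>s\<in>{0..1}. f k s > 0"
    and adiff: "\<forall>k\<le>n. \<forall>s\<in>{0..1}. \<alpha> k differentiable (at s within {0..1})"
    and t: "t \<in> {0..1}"
    and aderiv: "\<forall>k\<le>n. (\<alpha> k has_real_derivative \<alpha>' k) (at t within {0..1})"
    and c1: "\<forall>k<n. \<alpha> k t \<le> \<alpha> (k+1) t"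
    and c2: "\<forall>k\<le>n. \<alpha>' k \<ge> 0"
    and c3: "\<forall>k. k + 2 \<le> n \<longrightarrow>
       \<alpha> (k+1) t * (1 - \<alpha> (k+1) t) * (f (k+1) t)^2
         - \<alpha> (k+2) t * (1 - \<alpha> k t) * f k t * f (k+2) t \<ge> 0"
    and c4: "\<forall>k. k + 2 \<le> n \<longrightarrow> (f (k+1) t)^2 - f k t * f (k+2) t > 0"
  shows "\<forall>k. k + 2 \<le> n \<longrightarrow>
     (1 - \<alpha> k t) * (1 - \<alpha> (k+1) t) * f k t
       + 2 * \<alpha> (k+1) t * (1 - \<alpha> (k+1) t) * f (k+1) t
       + \<alpha> (k+1) t * \<alpha> (k+2) t * f (k+2) t
       - (1 / v) * f (k+1) t * \<alpha>' (k+1)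
     \<le> (2 * gflux n \<alpha> f k t * gflux n \<alpha> f (k+1) t * f (k+1) t
          - (gflux n \<alpha> f k t)^2 * f (k+2) t
          - (gflux n \<alpha> f (k+1) t)^2 * f k t)
       / ((f (k+1) t)^2 - f k t * f (k+2) t)"
proof (intro allI impI, goal_cases)
  case (1 k)
  then have k: "k + 2 \<le> n" .
  let "?H - ?p \<le> ?R" = ?case
  have unit: "0 \<le> \<alpha> k t" "\<alpha> (k+2) t \<le> 1"
    using path t k unfolding constant_speed_path_def coeffs_A_def by auto
  have mono: "\<alpha> k t \<le> \<alpha> (k+1) t" "\<alpha> (k+1) t \<le> \<alpha> (k+2) t"
    using c1 k by (auto dest: spec[of _ "k+1"])
  have "0 < f k t" "0 < f (k+1) t" "0 < f (k+2) t"
    using fpos t k by auto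
  then have bound: "?H \<le> ?R"
    using quadratic_gap_bound[OF unit(1) mono unit(2)] c3 c4 k
    by (simp add: gflux_less mult.assoc)
  have "0 \<le> ?p"
    using v \<open>0 < f (k+1) t\<close> c2 k by simp
  with bound show ?case by linarith
qed

end
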